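(* Let $N$ be a positive integer, $L>0$, and $\zeta=(\zeta_0,\dots,\zeta_{N+2})\in\mathbb{R}^{N+3}$ with $\zeta_0>\zeta_1>\dots>\zeta_{N+1}>\zeta_{N+2}=0$. With $x_i,g_i,f_i$ and $W^\zeta$ as defined in the context, the function $W^\zeta:\mathbb{R}^{N+1}\to\mathbb{R}$ is convex and has a Lipschitz-continuous gradient with constant $L$, and $W^\zeta(x_i)=f_i$, $\nabla W^\zeta(x_i)=g_i$ for all $i\in\{0,\dots,N+1\}$.
   Context: Let $e_0,\dots,e_N$ denote the standard unit vectors of $\mathbb{R}^{N+1}$ (zero-based indexing). Define for $i=0,\dots,N+1$: $x_i=-\sum_{j=0}^{i-1}\frac{\zeta_j-\zeta_{i+1}}{\sqrt{\zeta_j-\zeta_{j+1}}}e_j\in\mathbb{R}^{N+1}$; $g_i=L\sqrt{\zeta_i-\zeta_{i+1}}\,e_i$ for $i=0,\dots,N$ and $g_{N+1}=0$; $f_i=\frac L2(\zeta_i+\zeta_{i+1})$ for $i=0,\dots,N$ and $f_{N+1}=0$. For $y\in\mathbb{R}^{N+1}$, $\nu\in\mathbb{R}^{N+1}$, $\alpha=(\alpha_0,\dots,\alpha_{N+1})\in\mathbb{R}^{N+2}$ let $w^\zeta(y,\nu,\alpha)=\frac L2\|y+\nu-\sum_{i=0}^{N+1}\alpha_i(x_i-\frac1Lg_i)\|^2+\sum_{i=0}^{N+1}\alpha_i(f_i-\frac1{2L}\|g_i\|^2)$, and $W^\zeta(y)=\min\{w^\zeta(y,\nu,\alpha):\nu\in\mathbb{R}^{N+1}_+,\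 \alpha\in\Delta_{N+2}\}$, where $\mathbb{R}^{N+1}_+$ is the nonnegative orthant and $\Delta_{N+2}=\{\alpha\in\mathbb{R}^{N+2}:\alpha_i\geq0,\ \sum_i\alpha_i=1\}$. *)

theory Defs
  imports "HOL-Analysis.Analysis"
begin

text \<open>R^{N+1} is rendered as real^'n, where enum is a bijection from {0..N}
  onto the index type 'n; e_j is the standard unit vector at index enum j.\<close>

definition uvec :: "(nat \<Rightarrow> 'n::finite) \<Rightarrow> nat \<Rightarrow> real^'n" where
  "uvec enum j = axis (enum j) 1"

definition xpt :: "(nat \<Rightarrow> real) \<Rightarrow> (nat \<Rightarrow> 'n::finite) \<Rightarrow> nat \<Rightarrow> real^'n" where
  "xpt \<zeta> enum i = - (\<Sum>j<i. ((\<zeta> j - \<zeta> (i+1)) / sqrt (\<zeta> j - \<zeta> (j+1))) *\<^sub>R uvec enum j)"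

definition gpt :: "nat \<Rightarrow> real \<Rightarrow> (nat \<Rightarrow> real) \<Rightarrow> (nat \<Rightarrow> 'n::finite) \<Rightarrow> nat \<Rightarrow> real^'n" where
  "gpt N L \<zeta> enum i = (if i \<le> N then (L * sqrt (\<zeta> i - \<zeta> (i+1))) *\<^sub>R uvec enum i else 0)"

definition fval :: "nat \<Rightarrow> real \<Rightarrow> (nat \<Rightarrow> real) \<Rightarrow> nat \<Rightarrow> real" where
  "fval N L \<zeta> i = (if i \<le> N then L / 2 * (\<zeta> i + \<zeta> (i+1)) else 0)"

definition wfun :: "nat \<Rightarrow> real \<Rightarrow> (nat \<Rightarrow> real) \<Rightarrow> (nat \<Rightarrow> 'n::finite)
    \<Rightarrow> real^'n \<Rightarrow> real^'n \<Rightarrow> (nat \<Rightarrow> real) \<Rightarrow> real" where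
  "wfun N L \<zeta> enum y \<nu> \<alpha> =
     L / 2 * (norm (y + \<nu> - (\<Sum>i\<le>N+1. \<alpha> i *\<^sub>R (xpt \<zeta> enum i - (1/L) *\<^sub>R gpt N L \<zeta> enum i))))^2
     + (\<Sum>i\<le>N+1. \<alpha> i * (fval N L \<zeta> i - 1/(2*L) * (norm (gpt N L \<zeta> enum i))^2))"

text \<open>W^zeta(y): minimum (rendered as infimum) over nu in the nonnegative orthant
  and alpha in the simplex Delta_{N+2} (alpha indexed by 0..N+1).\<close>
definition Wfun :: "nat \<Rightarrow> real \<Rightarrow> (nat \<Rightarrow> real) \<Rightarrow> (nat \<Rightarrow> 'n::finite) \<Rightarrow> real^'n \<Rightarrow> real" where
  "Wfun N L \<zeta> enum y = Inf {wfun N L \<zeta> enum y \<nu> \<alpha> | \<nu> \<alpha>.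
      (\<forall>k. 0 \<le> \<nu> $ k) \<and> (\<forall>i\<le>N+1. 0 \<le> \<alpha> i) \<and> (\<Sum>i\<le>N+1. \<alpha> i) = 1}"

end

theory Submission
  imports Defs
begin

(* W is the envelope y |-> min {L/2 |y - u|^2 + c | (u, c) in S} of the convex set S of pairs
   (sum_i a_i z_i - nu, sum_i a_i b_i) with z_i = x_i - g_i/L and b_i = f_i - |g_i|^2/(2L).
   By convexity of S, a minimiser (u, c) at y is characterised by the variational inequality
   L <y - u, v - u> <= d - c for all (v, d) in S.  With G y = L (y - u) this gives
     W y + <G y, y' - y> + |G y' - G y|^2/(2L) <= W y' <= W y + <G y, y' - y> + L/2 |y' - y|^2,
   hence W is convex and differentiable with gradient G, and G is L-Lipschitz.
   The data (x_i, g_i, f_i) satisfy the interpolation conditions of L-smooth convex functions,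
   which say exactly that (z_i, b_i) satisfies the variational inequality at y = x_i;
   so W x_i = f_i and G x_i = L (x_i - z_i) = g_i. *)

lemma norm_add_sq:
  fixes a b :: "'v::real_inner"
  shows "(norm (a + b))^2 = (norm a)^2 + 2 * (a \<bullet> b) + (norm b)^2"
  by (simp add: power2_norm_eq_inner inner_add_left inner_add_right inner_commute)

lemma nonneg_if_nonneg_quadratic_near_zero:
  fixes A B :: real
  assumes "B \<ge> 0" and nonneg: "\<And>t. 0 < t \<Longrightarrow> t \<le> 1 \<Longrightarrow> t * A + t^2 * B \<ge> 0"
  shows "A \<ge> 0"
proof (rule ccontr)
  assume "\<not> A \<ge> 0"
  define t where "t = min 1 (- A / (B + 1))"
  have t: "0 < t" "t \<le> 1" using \<open>\<not> A \<ge> 0\<close> \<open>B \<ge> 0\<close> by (auto simp: t_def divide_neg_pos)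
  have "t * (B + 1) \<le> - A"
    using \<open>B \<ge> 0\<close> by (cases "1 \<le> - A / (B + 1)") (auto simp: t_def min_def field_simps)
  then have "A + t * B < 0" using t(1) by (simp add: algebra_simps)
  then have "t * (A + t * B) < 0" using t(1) by (rule mult_pos_neg[rotated])
  then have "t * A + t^2 * B < 0" by (simp add: power2_eq_square algebra_simps)
  with nonneg[OF t] show False by simp
qed

lemma convex_on_if_above_tangents:
  fixes W :: "'v::real_inner \<Rightarrow> real"
  assumes tangent: "\<And>x y. W x + G x \<bullet> (y - x) \<le> W y"
  shows "convex_on UNIV W"
proof (rule convex_onI)
  fix t :: real and x y :: 'v assume t: "0 < t" "t < 1"
  define z where "z = (1 - t) *\<^sub>R x + t *\<^sub>R y"
  have "(1 - t) *\<^sub>R (x - z) + t *\<^sub>R (y - z) = 0"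
    by (simp add: z_def algebra_simps)
  then have "(1 - t) * (G z \<bullet> (x - z)) + t * (G z \<bullet> (y - z)) = 0"
    by (metis inner_add_right inner_scaleR_right inner_zero_right)
  moreover have "(1 - t) * (W z + G z \<bullet> (x - z)) \<le> (1 - t) * W x"
    using tangent[of z x] t by (intro mult_left_mono) auto
  moreover have "t * (W z + G z \<bullet> (y - z)) \<le> t * W y"
    using tangent[of z y] t by (intro mult_left_mono) auto
  ultimately show "W ((1 - t) *\<^sub>R x + t *\<^sub>R y) \<le> (1 - t) * W x + t * W y"
    unfolding z_def[symmetric] by (simp add: algebra_simps)
qed simp

lemma gderiv_if_tangent_sandwich:
  fixes W :: "'v::real_inner \<Rightarrow> real"
  assumes lower: "\<And>y'. W y + G \<bullet> (y' - y) \<le> W y'"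
    and upper: "\<And>y'. W y' \<le> W y + G \<bullet> (y' - y) + K * (norm (y' - y))^2"
  shows "GDERIV W y :> G"
  unfolding gderiv_def has_derivative_at_alt
proof (intro conjI allI impI)
  show "bounded_linear (\<lambda>h. h \<bullet> G)" by (rule bounded_linear_inner_left)
  fix e :: real assume "e > 0"
  show "\<exists>d>0. \<forall>y'. norm (y' - y) < d \<longrightarrow> norm (W y' - W y - (y' - y) \<bullet> G) \<le> e * norm (y' - y)"
  proof (intro exI[of _ "e / (\<bar>K\<bar> + 1)"] conjI allI impI)
    show "e / (\<bar>K\<bar> + 1) > 0" using \<open>e > 0\<close> by simp
    fix y' assume "norm (y' - y) < e / (\<bar>K\<bar> + 1)"
    then have "\<bar>K\<bar> * norm (y' - y) \<le> e"
      by (simp add: field_simps) (smt (verit) mult_nonneg_nonneg norm_ge_zero)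
    then have "K * (norm (y' - y))^2 \<le> e * norm (y' - y)"
      by (smt (verit) abs_ge_self mult_right_mono norm_ge_zero power2_eq_square mult.assoc)
    then show "norm (W y' - W y - (y' - y) \<bullet> G) \<le> e * norm (y' - y)"
      using lower[of y'] upper[of y'] by (simp add: inner_commute)
  qed
qed

lemma lipschitz_on_if_cocoercive:
  fixes G :: "'v::real_inner \<Rightarrow> 'v"
  assumes "L > 0" and cocoercive: "\<And>x y. (norm (G x - G y))^2 \<le> L * ((G x - G y) \<bullet> (x - y))"
  shows "L-lipschitz_on UNIV G"
proof (rule lipschitz_onI)
  fix x y :: 'v
  have "(norm (G x - G y))^2 \<le> L * (norm (G x - G y) * norm (x - y))"
    using cocoercive[of x y] norm_cauchy_schwarz[of "G x - G y" "x - y"] \<open>L > 0\<close>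
    by (smt (verit) mult_left_mono)
  then have "norm (G x - G y) \<le> L * norm (x - y)"
    using \<open>L > 0\<close> by (cases "G x = G y") (auto simp: power2_eq_square)
  then show "dist (G x) (G y) \<le> L * dist x y" by (simp add: dist_norm)
qed (use \<open>L > 0\<close> in simp)

definition quad_cost :: "real \<Rightarrow> 'v::real_inner \<Rightarrow> 'v \<times> real \<Rightarrow> real" where
  "quad_cost L y p = L/2 * (norm (y - fst p))^2 + snd p"

definition quad_envelope :: "real \<Rightarrow> ('v::real_inner \<times> real) set \<Rightarrow> 'v \<Rightarrow> real" where
  "quad_envelope L S y = (INF p\<in>S. quad_cost L y p)"

definition prox_optimal :: "real \<Rightarrow> ('v::real_inner \<times> real) set \<Rightarrow> 'v \<Rightarrow> 'v \<times> real \<Rightarrow> bool" where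
  "prox_optimal L S y p \<longleftrightarrow> p \<in> S \<and> (\<forall>q\<in>S. L * ((y - fst p) \<bullet> (fst q - fst p)) \<le> snd q - snd p)"

lemma prox_optimal_if_minimizer:
  assumes "L > 0" "convex S" "p \<in> S"
    and min: "\<And>q. q \<in> S \<Longrightarrow> quad_cost L y p \<le> quad_cost L y q"
  shows "prox_optimal L S y p"
  unfolding prox_optimal_def
proof (intro conjI ballI)
  fix q assume "q \<in> S"
  define r where "r = y - fst p"
  define d where "d = fst q - fst p"
  have perturb: "t * (snd q - snd p - L * (r \<bullet> d)) + t^2 * (L/2 * (norm d)^2) \<ge> 0"
    if t: "0 < t" "t \<le> 1" for t
  proof -
    have comb: "y - fst ((1 - t) *\<^sub>R p + t *\<^sub>R q) = r + (- t) *\<^sub>R d"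
      by (simp add: r_def d_def algebra_simps)
    have expand: "quad_cost L y ((1 - t) *\<^sub>R p + t *\<^sub>R q) = quad_cost L y p
        + (t * (snd q - snd p - L * (r \<bullet> d)) + t^2 * (L/2 * (norm d)^2))"
      unfolding quad_cost_def comb norm_add_sq by (simp add: r_def power_mult_distrib algebra_simps)
    have "(1 - t) *\<^sub>R p + t *\<^sub>R q \<in> S"
      using \<open>convex S\<close> \<open>p \<in> S\<close> \<open>q \<in> S\<close> t by (intro convexD) auto
    from min[OF this] show ?thesis unfolding expand by simp
  qed
  have "L/2 * (norm d)^2 \<ge> 0" using \<open>L > 0\<close> by simp
  from nonneg_if_nonneg_quadratic_near_zero[OF this perturb]
  have "snd q - snd p - L * (r \<bullet> d) \<ge> 0" .
  then show "L * ((y - fst p) \<bullet> (fst q - fst p)) \<le> snd q - snd p"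
    by (simp add: r_def d_def)
qed (rule \<open>p \<in> S\<close>)

lemma quad_cost_lower_bound:
  assumes opt: "prox_optimal L S y p" and "q \<in> S"
  shows "quad_cost L y p + L * ((y - fst p) \<bullet> (y' - y))
           + L/2 * (norm ((y' - fst q) - (y - fst p)))^2 \<le> quad_cost L y' q"
proof -
  define r where "r = y - fst p"
  define D where "D = (y' - fst q) - r"
  have split: "y' - fst q = r + D" by (simp add: D_def)
  have "D = (y' - y) - (fst q - fst p)" by (simp add: D_def r_def)
  then have "r \<bullet> D = r \<bullet> (y' - y) - r \<bullet> (fst q - fst p)" by (simp add: inner_diff_right)
  moreover have "quad_cost L y' q = L/2 * (norm r)^2 + L * (r \<bullet> D) + L/2 * (norm D)^2 + snd q"
    unfolding quad_cost_def split norm_add_sq by (simp add: algebra_simps)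
  moreover have "L * (r \<bullet> (fst q - fst p)) \<le> snd q - snd p"
    using opt \<open>q \<in> S\<close> by (simp add: prox_optimal_def r_def)
  ultimately show ?thesis by (simp add: quad_cost_def D_def r_def algebra_simps)
qed

lemma prox_optimal_minimizes:
  assumes "L \<ge> 0" "prox_optimal L S y p" "q \<in> S"
  shows "quad_cost L y p \<le> quad_cost L y q"
  using quad_cost_lower_bound[OF assms(2,3), of y]
    mult_nonneg_nonneg[OF \<open>L \<ge> 0\<close> zero_le_power2[of "norm (fst p - fst q)"]] by simp

lemma quad_envelope_eq_if_prox_optimal:
  assumes "L \<ge> 0" and opt: "prox_optimal L S y p"
  shows "quad_envelope L S y = quad_cost L y p"
  unfolding quad_envelope_def
proof (rule cInf_eq_minimum)
  show "quad_cost L y p \<in> quad_cost L y ` S" using opt by (simp add: prox_optimal_def)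
  fix c assume "c \<in> quad_cost L y ` S"
  then show "quad_cost L y p \<le> c" using prox_optimal_minimizes[OF assms] by blast
qed

lemma prox_optimal_unique:
  assumes "L > 0" "prox_optimal L S y p" "prox_optimal L S y q"
  shows "fst p = fst q"
proof -
  have "p \<in> S" "q \<in> S" using assms by (simp_all add: prox_optimal_def)
  have "quad_cost L y p + L/2 * (norm (fst p - fst q))^2 \<le> quad_cost L y q"
    using quad_cost_lower_bound[OF assms(2) \<open>q \<in> S\<close>, of y] by simp
  moreover have "quad_cost L y q + L/2 * (norm (fst p - fst q))^2 \<le> quad_cost L y p"
    using quad_cost_lower_bound[OF assms(3) \<open>p \<in> S\<close>, of y] by (simp add: norm_minus_commute)
  ultimately have "L * (norm (fst p - fst q))^2 \<le> 0" by simp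
  then show ?thesis using \<open>L > 0\<close> by (simp add: mult_le_0_iff)
qed

lemma quad_envelope_lower_bound:
  assumes "L \<ge> 0" "prox_optimal L S y p" "prox_optimal L S y' p'"
  shows "quad_envelope L S y + L * ((y - fst p) \<bullet> (y' - y))
           + L/2 * (norm ((y' - fst p') - (y - fst p)))^2 \<le> quad_envelope L S y'"
  using quad_cost_lower_bound[OF assms(2), of p' y'] assms
  by (simp add: quad_envelope_eq_if_prox_optimal prox_optimal_def)

lemma quad_envelope_upper_bound:
  assumes "L \<ge> 0" "prox_optimal L S y p" "prox_optimal L S y' p'"
  shows "quad_envelope L S y' \<le> quad_envelope L S y + L * ((y - fst p) \<bullet> (y' - y)) + L/2 * (norm (y' - y))^2"
proof -
  have split: "y' - fst p = (y - fst p) + (y' - y)" by simp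
  have "quad_envelope L S y' \<le> quad_cost L y' p"
    using assms prox_optimal_minimizes[OF assms(1,3)] by (simp add: quad_envelope_eq_if_prox_optimal prox_optimal_def)
  also have "\<dots> = quad_envelope L S y + L * ((y - fst p) \<bullet> (y' - y)) + L/2 * (norm (y' - y))^2"
    unfolding quad_envelope_eq_if_prox_optimal[OF assms(1,2)] quad_cost_def split norm_add_sq
    by (simp add: algebra_simps)
  finally show ?thesis .
qed

theorem quad_envelope_convex_smooth:
  fixes S :: "('v::real_inner \<times> real) set"
  assumes "L > 0" "convex S"
    and attains: "\<And>y. \<exists>p\<in>S. \<forall>q\<in>S. quad_cost L y p \<le> quad_cost L y q"
  shows "convex_on UNIV (quad_envelope L S)
    \<and> (\<exists>G. (\<forall>y. GDERIV (quad_envelope L S) y :> G y) \<and> L-lipschitz_on UNIV G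
           \<and> (\<forall>y p. prox_optimal L S y p \<longrightarrow> G y = L *\<^sub>R (y - fst p)))"
proof -
  have "\<exists>p. prox_optimal L S y p" for y
    using attains[of y] prox_optimal_if_minimizer[OF assms(1,2)] by blast
  then obtain prox where opt: "\<And>y. prox_optimal L S y (prox y)" by metis
  define W where "W = quad_envelope L S"
  define G where "G y = L *\<^sub>R (y - fst (prox y))" for y
  have lower: "W y + G y \<bullet> (y' - y) + 1/(2*L) * (norm (G y' - G y))^2 \<le> W y'" for y y'
  proof -
    have "G y' - G y = L *\<^sub>R ((y' - fst (prox y')) - (y - fst (prox y)))"
      by (simp add: G_def algebra_simps)
    then have "1/(2*L) * (norm (G y' - G y))^2 = L/2 * (norm ((y' - fst (prox y')) - (y - fst (prox y))))^2"
      using \<open>L > 0\<close> by (simp add: power_mult_distrib power2_eq_square)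
    then show ?thesis
      using quad_envelope_lower_bound[OF _ opt[of y] opt[of y']] \<open>L > 0\<close> by (simp add: W_def G_def)
  qed
  have upper: "W y' \<le> W y + G y \<bullet> (y' - y) + L/2 * (norm (y' - y))^2" for y y'
    using quad_envelope_upper_bound[OF _ opt[of y] opt[of y']] \<open>L > 0\<close> by (simp add: W_def G_def)
  have tangent: "W y + G y \<bullet> (y' - y) \<le> W y'" for y y'
    using lower[of y y'] \<open>L > 0\<close> by (smt (verit) divide_nonneg_nonneg zero_le_power2 mult_nonneg_nonneg)
  have "(norm (G x - G y))^2 \<le> L * ((G x - G y) \<bullet> (x - y))" for x y
    using lower[of x y] lower[of y x] \<open>L > 0\<close>
    by (simp add: norm_minus_commute inner_diff_left inner_diff_right inner_commute field_simps)
  then have "L-lipschitz_on UNIV G"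
    by (rule lipschitz_on_if_cocoercive[OF \<open>L > 0\<close>])
  moreover have "GDERIV W y :> G y" for y
    by (rule gderiv_if_tangent_sandwich[OF tangent upper])
  moreover have "G y = L *\<^sub>R (y - fst p)" if "prox_optimal L S y p" for y p
    using prox_optimal_unique[OF \<open>L > 0\<close> that opt[of y]] by (simp add: G_def)
  ultimately show ?thesis
    using convex_on_if_above_tangents[OF tangent] unfolding W_def by blast
qed

lemma convex_hull_finite_image:
  fixes p :: "'i \<Rightarrow> 'a::real_vector"
  assumes "finite I"
  shows "convex hull (p ` I) = {\<Sum>i\<in>I. \<alpha> i *\<^sub>R p i | \<alpha>. (\<forall>i\<in>I. 0 \<le> \<alpha> i) \<and> sum \<alpha> I = 1}"
    (is "_ = ?comb")
proof (rule hull_unique)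
  show "p ` I \<subseteq> ?comb"
  proof
    fix x assume "x \<in> p ` I"
    then obtain j where "j \<in> I" "x = p j" by blast
    moreover have "(\<Sum>i\<in>I. (if i = j then 1 else 0) *\<^sub>R p i) = p j"
      using assms \<open>j \<in> I\<close> by (simp add: if_distrib[of "\<lambda>c. c *\<^sub>R _"] cong: if_cong)
    ultimately show "x \<in> ?comb"
      using assms by (intro CollectI exI[of _ "\<lambda>i. if i = j then 1 else 0"]) simp
  qed
  show "convex ?comb"
  proof (rule convexI)
    fix x y and u v :: real
    assume "x \<in> ?comb" "y \<in> ?comb" "0 \<le> u" "0 \<le> v" "u + v = 1"
    then obtain \<alpha> \<beta> where x: "x = (\<Sum>i\<in>I. \<alpha> i *\<^sub>R p i)" "\<forall>i\<in>I. 0 \<le> \<alpha> i" "sum \<alpha> I = 1"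
      and y: "y = (\<Sum>i\<in>I. \<beta> i *\<^sub>R p i)" "\<forall>i\<in>I. 0 \<le> \<beta> i" "sum \<beta> I = 1" by blast
    have "u *\<^sub>R x + v *\<^sub>R y = (\<Sum>i\<in>I. (u * \<alpha> i + v * \<beta> i) *\<^sub>R p i)"
      by (simp add: x y scaleR_sum_right scaleR_add_left sum.distrib)
    moreover have "sum (\<lambda>i. u * \<alpha> i + v * \<beta> i) I = 1"
      using x(3) y(3) \<open>u + v = 1\<close> by (simp add: sum.distrib flip: sum_distrib_left)
    ultimately show "u *\<^sub>R x + v *\<^sub>R y \<in> ?comb"
      using x(2) y(2) \<open>0 \<le> u\<close> \<open>0 \<le> v\<close> by (intro CollectI exI[of _ "\<lambda>i. u * \<alpha> i + v * \<beta> i"]) simp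
  qed
  show "?comb \<subseteq> T" if "p ` I \<subseteq> T" "convex T" for T
    using that assms by (auto intro!: convex_sum)
qed

definition orthant_shift :: "((real^'n) \<times> real) set \<Rightarrow> ((real^'n) \<times> real) set" where
  "orthant_shift C = {(a - \<nu>, c) | a c \<nu>. (a, c) \<in> C \<and> (\<forall>k. 0 \<le> \<nu> $ k)}"

lemma convex_orthant_shift:
  assumes "convex C"
  shows "convex (orthant_shift C)"
proof (rule convexI)
  fix p q and u v :: real
  assume "p \<in> orthant_shift C" "q \<in> orthant_shift C" "0 \<le> u" "0 \<le> v" "u + v = 1"
  then obtain a c \<nu> a' c' \<nu>' where pq: "p = (a - \<nu>, c)" "q = (a' - \<nu>', c')"
    and C: "(a, c) \<in> C" "(a', c') \<in> C" and \<nu>: "\<forall>k. 0 \<le> \<nu> $ k" "\<forall>k. 0 \<le> \<nu>' $ k"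
    unfolding orthant_shift_def by blast
  have "u *\<^sub>R (a, c) + v *\<^sub>R (a', c') \<in> C"
    using convexD[OF assms C] \<open>0 \<le> u\<close> \<open>0 \<le> v\<close> \<open>u + v = 1\<close> by blast
  moreover have "\<forall>k. 0 \<le> (u *\<^sub>R \<nu> + v *\<^sub>R \<nu>') $ k"
    using \<nu> \<open>0 \<le> u\<close> \<open>0 \<le> v\<close> by simp
  moreover have "u *\<^sub>R p + v *\<^sub>R q = (u *\<^sub>R a + v *\<^sub>R a' - (u *\<^sub>R \<nu> + v *\<^sub>R \<nu>'), u * c + v * c')"
    by (simp add: pq algebra_simps)
  ultimately show "u *\<^sub>R p + v *\<^sub>R q \<in> orthant_shift C"
    unfolding orthant_shift_def
    by (intro CollectI exI[of _ "u *\<^sub>R a + v *\<^sub>R a'"] exI[of _ "u * c + v * c'"]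
        exI[of _ "u *\<^sub>R \<nu> + v *\<^sub>R \<nu>'"]) simp
qed

lemma orthant_shift_attains_quad_min:
  fixes C :: "((real^'n) \<times> real) set"
  assumes "compact C" "C \<noteq> {}" "L \<ge> 0"
  shows "\<exists>p\<in>orthant_shift C. \<forall>q\<in>orthant_shift C. quad_cost L y p \<le> quad_cost L y q"
proof -
  \<comment> \<open>For a fixed generator the optimal shift is explicit, which reduces the
      minimisation to the compact set C.\<close>
  define clip :: "real^'n \<Rightarrow> real^'n" where "clip a = (\<chi> k. max 0 (a $ k - y $ k))" for a
  have clip_best: "norm (y - (a - clip a)) \<le> norm (y - (a - \<nu>))" if "\<forall>k. 0 \<le> \<nu> $ k" for a \<nu>
  proof (rule norm_le_componentwise_cart)
    fix k
    have "0 \<le> \<nu> $ k" using that by blast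
    then show "norm ((y - (a - clip a)) $ k) \<le> norm ((y - (a - \<nu>)) $ k)"
      by (simp add: clip_def max_def)
  qed
  have clip_cont: "continuous_on UNIV clip"
    unfolding clip_def by (intro continuous_on_vec_lambda continuous_on_max continuous_on_const
        continuous_on_diff continuous_on_component continuous_on_id)
  have "continuous_on C (\<lambda>p. quad_cost L y (fst p - clip (fst p), snd p))"
    unfolding quad_cost_def fst_conv snd_conv
    by (intro continuous_intros continuous_on_compose2[OF clip_cont]) auto
  then obtain e where "e \<in> C"
    and e_min: "\<And>p. p \<in> C \<Longrightarrow> quad_cost L y (fst e - clip (fst e), snd e) \<le> quad_cost L y (fst p - clip (fst p), snd p)"
    using continuous_attains_inf[OF assms(1,2)] by blast
  obtain a0 c0 where e: "e = (a0, c0)" by force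
  show ?thesis
  proof (intro bexI ballI)
    show "(a0 - clip a0, c0) \<in> orthant_shift C"
      using \<open>e \<in> C\<close> unfolding orthant_shift_def e
      by (intro CollectI exI[of _ a0] exI[of _ c0] exI[of _ "clip a0"]) (simp add: clip_def)
    fix q assume "q \<in> orthant_shift C"
    then obtain a c \<nu> where q: "q = (a - \<nu>, c)" "(a, c) \<in> C" "\<forall>k. 0 \<le> \<nu> $ k"
      unfolding orthant_shift_def by blast
    have "quad_cost L y (a0 - clip a0, c0) \<le> quad_cost L y (a - clip a, c)"
      using e_min[OF q(2)] by (simp add: e)
    also have "\<dots> \<le> quad_cost L y q"
      using clip_best[OF q(3), of a] \<open>L \<ge> 0\<close>
      by (simp add: q quad_cost_def mult_left_mono power_mono)
    finally show "quad_cost L y (a0 - clip a0, c0) \<le> quad_cost L y q" .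
  qed
qed

definition zpt :: "nat \<Rightarrow> real \<Rightarrow> (nat \<Rightarrow> real) \<Rightarrow> (nat \<Rightarrow> 'n::finite) \<Rightarrow> nat \<Rightarrow> real^'n" where
  "zpt N L \<zeta> enum i = xpt \<zeta> enum i - (1/L) *\<^sub>R gpt N L \<zeta> enum i"

definition bval :: "nat \<Rightarrow> real \<Rightarrow> (nat \<Rightarrow> real) \<Rightarrow> (nat \<Rightarrow> 'n::finite) \<Rightarrow> nat \<Rightarrow> real" where
  "bval N L \<zeta> enum i = fval N L \<zeta> i - 1/(2*L) * (norm (gpt N L \<zeta> enum i))^2"

definition interp_set :: "nat \<Rightarrow> real \<Rightarrow> (nat \<Rightarrow> real) \<Rightarrow> (nat \<Rightarrow> 'n::finite) \<Rightarrow> ((real^'n) \<times> real) set" where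
  "interp_set N L \<zeta> enum =
     orthant_shift (convex hull ((\<lambda>i. (zpt N L \<zeta> enum i, bval N L \<zeta> enum i)) ` {..N+1}))"

lemma Wfun_eq_quad_envelope: "Wfun N L \<zeta> enum = quad_envelope L (interp_set N L \<zeta> enum)"
proof
  fix y
  let ?z = "zpt N L \<zeta> enum" and ?b = "bval N L \<zeta> enum"
  have hull: "convex hull ((\<lambda>i. (?z i, ?b i)) ` {..N+1})
      = {((\<Sum>i\<le>N+1. \<alpha> i *\<^sub>R ?z i), (\<Sum>i\<le>N+1. \<alpha> i * ?b i)) | \<alpha>. (\<forall>i\<le>N+1. 0 \<le> \<alpha> i) \<and> sum \<alpha> {..N+1} = 1}"
    unfolding convex_hull_finite_image[OF finite_atMost]
    by (auto simp: prod_eq_iff fst_sum snd_sum simp del: sum.atMost_Suc)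
  have wfun: "wfun N L \<zeta> enum y \<nu> \<alpha> = quad_cost L y ((\<Sum>i\<le>N+1. \<alpha> i *\<^sub>R ?z i) - \<nu>, \<Sum>i\<le>N+1. \<alpha> i * ?b i)"
    for \<nu> \<alpha>
    unfolding wfun_def quad_cost_def zpt_def bval_def by (simp add: algebra_simps del: sum.atMost_Suc)
  show "Wfun N L \<zeta> enum y = quad_envelope L (interp_set N L \<zeta> enum) y"
    unfolding Wfun_def quad_envelope_def interp_set_def orthant_shift_def hull wfun
    by (intro arg_cong[where f = Inf]) blast
qed

context
  fixes N :: nat and L :: real and \<zeta> :: "nat \<Rightarrow> real" and enum :: "nat \<Rightarrow> 'n::finite"
  assumes L_pos: "L > 0"
    and bij: "bij_betw enum {..N} (UNIV :: 'n set)"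
    and zeta_decr: "\<forall>i\<le>N+1. \<zeta> (i+1) < \<zeta> i" and zeta_end: "\<zeta> (N+2) = 0"
begin

lemma zeta_antimono: "a \<le> b \<Longrightarrow> b \<le> N+2 \<Longrightarrow> \<zeta> b \<le> \<zeta> a"
  by (rule lift_Suc_antimono_le_ivl[of "{..N+1}"]) (use zeta_decr in auto)

lemma zeta_gap_pos: "i \<le> N+1 \<Longrightarrow> 0 < \<zeta> i - \<zeta> (i+1)"
  using zeta_decr by auto

lemma uvec_inner_uvec: "i \<le> N \<Longrightarrow> k \<le> N \<Longrightarrow> uvec enum i \<bullet> uvec enum k = (if i = k then 1 else 0)"
  using bij unfolding uvec_def bij_betw_def inj_on_def by (auto simp: inner_axis_axis)

lemma gpt_inner_xpt:
  assumes "i \<le> N+1" "j \<le> N+1"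
  shows "gpt N L \<zeta> enum i \<bullet> xpt \<zeta> enum j = (if i < j then - L * (\<zeta> i - \<zeta> (j+1)) else 0)"
proof (cases "i \<le> N")
  case True
  define s where "s = sqrt (\<zeta> i - \<zeta> (i+1))"
  have "s > 0" using zeta_gap_pos[of i] True by (simp add: s_def)
  have "gpt N L \<zeta> enum i \<bullet> xpt \<zeta> enum j =
      - (L * s) * (\<Sum>k<j. (\<zeta> k - \<zeta> (j+1)) / sqrt (\<zeta> k - \<zeta> (k+1)) * (uvec enum i \<bullet> uvec enum k))"
    using True by (simp add: gpt_def xpt_def s_def inner_sum_right sum_distrib_left sum_negf mult_ac)
  also have "(\<Sum>k<j. (\<zeta> k - \<zeta> (j+1)) / sqrt (\<zeta> k - \<zeta> (k+1)) * (uvec enum i \<bullet> uvec enum k))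
     = (\<Sum>k<j. if k = i then (\<zeta> i - \<zeta> (j+1)) / s else 0)"
    using True assms by (intro sum.cong) (auto simp: uvec_inner_uvec s_def)
  also have "\<dots> = (if i < j then (\<zeta> i - \<zeta> (j+1)) / s else 0)"
    by (simp add: sum.delta')
  finally show ?thesis using \<open>s > 0\<close> by auto
qed (use assms in \<open>simp add: gpt_def\<close>)

lemma gpt_inner_gpt:
  assumes "i \<le> N+1" "j \<le> N+1"
  shows "gpt N L \<zeta> enum i \<bullet> gpt N L \<zeta> enum j = (if i = j \<and> i \<le> N then L^2 * (\<zeta> i - \<zeta> (i+1)) else 0)"
  using assms zeta_gap_pos[of i] by (auto simp: gpt_def uvec_inner_uvec power2_eq_square)

lemma gpt_inner_nonneg:
  assumes "\<forall>k. 0 \<le> \<nu> $ k"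
  shows "0 \<le> gpt N L \<zeta> enum i \<bullet> \<nu>"
proof (cases "i \<le> N")
  case True
  then have "0 \<le> L * sqrt (\<zeta> i - \<zeta> (i+1)) * \<nu> $ enum i"
    using zeta_gap_pos[of i] L_pos assms by simp
  then show ?thesis using True by (simp add: gpt_def uvec_def inner_axis')
qed (simp add: gpt_def)

text \<open>The interpolation condition for L-smooth convex functions,
  f_j \<ge> f_i + \<langle>g_i, x_j - x_i\<rangle> + \<parallel>g_i - g_j\<parallel>^2/(2L), rewritten in terms of zpt and bval.\<close>
lemma gpt_interpolation:
  assumes i: "i \<le> N+1" and j: "j \<le> N+1"
  shows "gpt N L \<zeta> enum i \<bullet> (zpt N L \<zeta> enum j - zpt N L \<zeta> enum i) \<le> bval N L \<zeta> enum j - bval N L \<zeta> enum i"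
proof -
  let ?g = "gpt N L \<zeta> enum" and ?x = "xpt \<zeta> enum"
  have "?g i \<bullet> (zpt N L \<zeta> enum j - zpt N L \<zeta> enum i) - (bval N L \<zeta> enum j - bval N L \<zeta> enum i)
     = ?g i \<bullet> ?x j - ?g i \<bullet> ?x i - (?g i \<bullet> ?g j - ?g i \<bullet> ?g i) / L - fval N L \<zeta> j + fval N L \<zeta> i
       + (?g j \<bullet> ?g j - ?g i \<bullet> ?g i) / (2*L)"
    by (simp add: zpt_def bval_def inner_diff_right power2_norm_eq_inner algebra_simps diff_divide_distrib)
  also have "\<dots> \<le> 0"
  proof -
    have "\<zeta> i \<le> \<zeta> (j+1)" if "j < i" using zeta_antimono[of "j+1" i] that i by simp
    moreover have "0 \<le> \<zeta> (j+1)" using zeta_antimono[of "j+1" "N+2"] zeta_end j by simp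
    moreover have "\<zeta> (j+1) = 0" if "j = N+1" using zeta_end that by simp
    moreover have "0 < \<zeta> i - \<zeta> (i+1)" "0 < \<zeta> j - \<zeta> (j+1)" using zeta_gap_pos i j by auto
    ultimately show ?thesis
      unfolding gpt_inner_xpt[OF i j] gpt_inner_xpt[OF i i] gpt_inner_gpt[OF i j]
        gpt_inner_gpt[OF i i] gpt_inner_gpt[OF j j]
      using L_pos i j by (cases "i < j"; cases "i = j"; cases "i \<le> N"; cases "j \<le> N")
         (auto simp: fval_def field_simps power2_eq_square)
  qed
  finally show ?thesis by simp
qed

lemma prox_optimal_at_xpt:
  assumes i: "i \<le> N+1"
  shows "prox_optimal L (interp_set N L \<zeta> enum) (xpt \<zeta> enum i) (zpt N L \<zeta> enum i, bval N L \<zeta> enum i)"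
proof -
  let ?g = "gpt N L \<zeta> enum i" and ?z = "zpt N L \<zeta> enum" and ?b = "bval N L \<zeta> enum"
  let ?C = "convex hull ((\<lambda>j. (?z j, ?b j)) ` {..N+1})"
  define H where "H = {q. ?g \<bullet> (fst q - ?z i) \<le> snd q - ?b i}"
  have "H = {q. (?g, -1) \<bullet> q \<le> ?g \<bullet> ?z i - ?b i}"
    by (auto simp: H_def inner_diff_right prod_eq_iff)
  then have "convex H" by (simp add: convex_halfspace_le)
  moreover have "(\<lambda>j. (?z j, ?b j)) ` {..N+1} \<subseteq> H"
    using gpt_interpolation[OF i] by (auto simp: H_def)
  ultimately have "?C \<subseteq> H" by (rule hull_minimal[rotated])
  have "L *\<^sub>R (xpt \<zeta> enum i - ?z i) = ?g" using L_pos by (simp add: zpt_def)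
  then have grad: "L * ((xpt \<zeta> enum i - ?z i) \<bullet> v) = ?g \<bullet> v" for v
    by (metis inner_scaleR_left)
  show ?thesis
    unfolding prox_optimal_def
  proof (intro conjI ballI)
    have "(?z i, ?b i) \<in> ?C" using i by (intro hull_inc) auto
    then show "(?z i, ?b i) \<in> interp_set N L \<zeta> enum"
      unfolding interp_set_def orthant_shift_def by (intro CollectI exI[of _ "?z i"] exI[of _ "?b i"] exI[of _ 0]) simp
    fix q assume "q \<in> interp_set N L \<zeta> enum"
    then obtain a c \<nu> where q: "q = (a - \<nu>, c)" "(a, c) \<in> ?C" "\<forall>k. 0 \<le> \<nu> $ k"
      unfolding interp_set_def orthant_shift_def by blast
    have "?g \<bullet> (a - ?z i) \<le> c - ?b i" using q(2) \<open>?C \<subseteq> H\<close> by (auto simp: H_def)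
    moreover have "0 \<le> ?g \<bullet> \<nu>" using q(3) by (rule gpt_inner_nonneg)
    ultimately show "L * ((xpt \<zeta> enum i - fst (?z i, ?b i)) \<bullet> (fst q - fst (?z i, ?b i)))
        \<le> snd q - snd (?z i, ?b i)"
      using grad[of "a - \<nu> - ?z i"] by (simp add: q inner_diff_right)
  qed
qed

end

lemma convex_interp_set: "convex (interp_set N L \<zeta> enum)"
  by (simp add: interp_set_def convex_orthant_shift)

lemma interp_set_attains_quad_min:
  assumes "L \<ge> 0"
  shows "\<exists>p\<in>interp_set N L \<zeta> enum. \<forall>q\<in>interp_set N L \<zeta> enum. quad_cost L y p \<le> quad_cost L y q"
  unfolding interp_set_def
  by (rule orthant_shift_attains_quad_min[OF finite_imp_compact_convex_hull _ assms]) auto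

theorem corollary1:
  fixes N :: nat and L :: real and \<zeta> :: "nat \<Rightarrow> real" and enum :: "nat \<Rightarrow> 'n::finite"
  assumes "N > 0" and "L > 0"
    and "bij_betw enum {..N} (UNIV :: 'n set)"
    and "\<forall>i\<le>N+1. \<zeta> (i+1) < \<zeta> i" and "\<zeta> (N+2) = 0"
  shows "convex_on UNIV (Wfun N L \<zeta> enum)
    \<and> (\<exists>G :: real^'n \<Rightarrow> real^'n.
         (\<forall>y. GDERIV (Wfun N L \<zeta> enum) y :> G y)
       \<and> L-lipschitz_on UNIV G
       \<and> (\<forall>i\<le>N+1. Wfun N L \<zeta> enum (xpt \<zeta> enum i) = fval N L \<zeta> i
                   \<and> G (xpt \<zeta> enum i) = gpt N L \<zeta> enum i))"
proof -
  let ?S = "interp_set N L \<zeta> enum"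
  have "\<exists>p\<in>?S. \<forall>q\<in>?S. quad_cost L y p \<le> quad_cost L y q" for y
    using \<open>L > 0\<close> by (intro interp_set_attains_quad_min) simp
  from quad_envelope_convex_smooth[OF \<open>L > 0\<close> convex_interp_set this]
  obtain G where smooth: "convex_on UNIV (quad_envelope L ?S)"
      "\<forall>y. GDERIV (quad_envelope L ?S) y :> G y" "L-lipschitz_on UNIV G"
    and grad: "\<And>y p. prox_optimal L ?S y p \<Longrightarrow> G y = L *\<^sub>R (y - fst p)"
    by blast
  have "quad_envelope L ?S (xpt \<zeta> enum i) = fval N L \<zeta> i \<and> G (xpt \<zeta> enum i) = gpt N L \<zeta> enum i"
    if "i \<le> N+1" for i
  proof -
    note opt = prox_optimal_at_xpt[OF assms(2-5) that]
    have "xpt \<zeta> enum i - zpt N L \<zeta> enum i = (1/L) *\<^sub>R gpt N L \<zeta> enum i"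
      by (simp add: zpt_def)
    then show ?thesis
      using quad_envelope_eq_if_prox_optimal[OF _ opt] grad[OF opt] \<open>L > 0\<close>
      by (simp add: quad_cost_def bval_def power2_eq_square)
  qed
  with smooth show ?thesis unfolding Wfun_eq_quad_envelope by blast
qed

end
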